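(* Let $X$ be a one- or two-sided subshift with $\mathcal L(X)=\mathcal L(\tilde X)$ and let $p_X(n)$ be the number of blocks of length $n$ in $\mathcal L(X)$. Then for every $n\ge1$ the number of distinct paths of length $n$ in the HB diagram of $X$ that begin at a vertex which is a block of length one equals $p_X(n)$.
   Context: Let $\mathcal A$ be a finite alphabet and $\sigma$ the shift, $(\sigma x)_i=x_{i+1}$. A one-sided subshift is a nonempty closed $\sigma$-invariant $X^+\subseteq\mathcal A^{\mathbb N}$; its natural extension is $\tilde X=\{x\in\mathcal A^{\mathbb Z}: x_px_{p+1}\dots\in X^+ \text{ for all } p\in\mathbb Z\}$. For a two-sided subshift $X\subseteq\mathcal A^{\mathbb Z}$, $X^+$ is the set of right rays of points of $X$, so $\tilde X=X$. $\mathcal L(Y)$ denotes the set of finite blocks occurring in points of $Y$. For $a_{-n}\dots a_0\in\mathcal L(\tilde X)$, $\mathrm{fol}(a_{-n}\dots a_0)=\{b_0b_1\dots\in X^+:\exists b\in\tilde X \text{ with } b_{-n}\dots b_0=a_{-n}\dots a_0\}$. A block $a_{-n}\dots a_0\in\mathcal L(\tilde X)$ with $n\ge1$ is significant if $\mathrm{fol}(a_{-n}\dots a_0)\subsetneq\mathrm{fol}(a_{-n+1}\dots a_0)$; single symbols in $\mathcal L(\tilde X)$ are also counted as significant. $\mathrm{sig}(a_{-n}\dots a_0)$ is the longest significant suffix. The HB diagram has vertex set the significant blocks of $\tilde X$ and an arrow $\alpha\to\beta$ iff there is a symbol $b$ with $\alpha b\in\mathcal L(\tilde X)$ and $\beta=\mathrm{sig}(\alpha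 b)$. The length of a path is its number of vertices. *)

theory Defs
  imports Main
begin

text \<open>Closedness is in the product
  topology of the discrete alphabet, written out as: a point all of whose
  central (resp. initial) blocks are matched by points of the set lies in the set.\<close>

definition shift1 :: "(nat \<Rightarrow> 'a) \<Rightarrow> (nat \<Rightarrow> 'a)" where
  "shift1 x = (\<lambda>i. x (Suc i))"

definition shift2 :: "(int \<Rightarrow> 'a) \<Rightarrow> (int \<Rightarrow> 'a)" where
  "shift2 x = (\<lambda>i. x (i + 1))"

definition closed1 :: "(nat \<Rightarrow> 'a) set \<Rightarrow> bool" where
  "closed1 X \<longleftrightarrow> (\<forall>x. (\<forall>n. \<exists>y\<in>X. \<forall>i<n. y i = x i) \<longrightarrow> x \<in> X)"

definition closed2 :: "(int \<Rightarrow> 'a) set \<Rightarrow> bool" where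
  "closed2 X \<longleftrightarrow> (\<forall>x. (\<forall>n::nat. \<exists>y\<in>X. \<forall>i. \<bar>i\<bar> \<le> int n \<longrightarrow> y i = x i) \<longrightarrow> x \<in> X)"

definition subshift1 :: "(nat \<Rightarrow> 'a::finite) set \<Rightarrow> bool" where
  "subshift1 X \<longleftrightarrow> X \<noteq> {} \<and> closed1 X \<and> shift1 ` X \<subseteq> X"

definition subshift2 :: "(int \<Rightarrow> 'a::finite) set \<Rightarrow> bool" where
  "subshift2 X \<longleftrightarrow> X \<noteq> {} \<and> closed2 X \<and> shift2 ` X = X"

definition natext :: "(nat \<Rightarrow> 'a) set \<Rightarrow> (int \<Rightarrow> 'a) set" where
  "natext X = {x. \<forall>p::int. (\<lambda>i::nat. x (p + int i)) \<in> X}"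

definition lang1 :: "(nat \<Rightarrow> 'a) set \<Rightarrow> 'a list set" where
  "lang1 X = {w. \<exists>x\<in>X. \<exists>p::nat. w = map (\<lambda>i. x (p + i)) [0..<length w]}"

definition lang2 :: "(int \<Rightarrow> 'a) set \<Rightarrow> 'a list set" where
  "lang2 X = {w. \<exists>x\<in>X. \<exists>p::int. w = map (\<lambda>i. x (p + int i)) [0..<length w]}"

text \<open>Followers of a block w = a_{-n} ... a_0 (list of length n+1, last entry at
  coordinate 0), computed in the two-sided subshift T (= the natural extension).
  Right rays of points of T are exactly the elements of X^+.\<close>
definition fol :: "(int \<Rightarrow> 'a) set \<Rightarrow> 'a list \<Rightarrow> (nat \<Rightarrow> 'a) set" where
  "fol T w = {(\<lambda>i::nat. b (int i)) | b. b \<in> T \<and>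
       (\<forall>i<length w. b (int i - int (length w) + 1) = w ! i)}"

definition significant :: "(int \<Rightarrow> 'a) set \<Rightarrow> 'a list \<Rightarrow> bool" where
  "significant T w \<longleftrightarrow> w \<in> lang2 T \<and>
     (length w = 1 \<or> (length w \<ge> 2 \<and> fol T w \<subset> fol T (tl w)))"

definition sig :: "(int \<Rightarrow> 'a) set \<Rightarrow> 'a list \<Rightarrow> 'a list" where
  "sig T w = drop (length w - (GREATEST k. k \<le> length w \<and> significant T (drop (length w - k) w))) w"

definition hb_edge :: "(int \<Rightarrow> 'a) set \<Rightarrow> 'a list \<Rightarrow> 'a list \<Rightarrow> bool" where
  "hb_edge T \<alpha> \<beta> \<longleftrightarrow> significant T \<alpha> \<and> significant T \<beta> \<and>
     (\<exists>b. \<alpha> @ [b] \<in> lang2 T \<and> \<beta> = sig T (\<alpha> @ [b]))"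

text \<open>Paths in the HB diagram of T with n vertices starting at a length-one vertex.\<close>
definition hb_paths_from_symbols :: "(int \<Rightarrow> 'a) set \<Rightarrow> nat \<Rightarrow> 'a list list set" where
  "hb_paths_from_symbols T n = {ps. length ps = n \<and> (\<forall>v\<in>set ps. significant T v) \<and>
      length (hd ps) = 1 \<and> (\<forall>i. Suc i < n \<longrightarrow> hb_edge T (ps ! i) (ps ! Suc i))}"

end

theory Submission
  imports Defs
begin

text \<open>A word \<open>w\<close> of length \<open>n\<close> determines the sequence of longest significant suffixes
  of its prefixes \<open>w\<^sub>1\<dots>w\<^sub>k\<close>, and this sequence is a path of the HB diagram starting at a
  one-letter vertex. The path determines \<open>w\<close>, since \<open>sig u\<close> and \<open>u\<close> have the same last letter.
  Conversely every such path arises this way: a block and its longest significant suffix have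
  the same followers, and a significant block of length at least two stays significant after
  deleting its last letter, so \<open>sig (sig u @ [b]) = sig (u @ [b])\<close>; hence following an edge
  labelled \<open>b\<close> is the same as appending \<open>b\<close> to the word read so far.\<close>

lemma lang2_iff_nth:
  "w \<in> lang2 T \<longleftrightarrow> (\<exists>x\<in>T. \<exists>p. \<forall>i<length w. w ! i = x (p + int i))"
proof -
  have eq: "w = map (\<lambda>i. x (p + int i)) [0..<length w] \<longleftrightarrow> (\<forall>i<length w. w ! i = x (p + int i))"
    for x :: "int \<Rightarrow> 'a" and p
  proof
    assume w: "w = map (\<lambda>i. x (p + int i)) [0..<length w]"
    show "\<forall>i<length w. w ! i = x (p + int i)"
    proof (intro allI impI)
      fix i assume "i < length w"
      have "w ! i = map (\<lambda>i. x (p + int i)) [0..<length w] ! i" using w by (rule arg_cong)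
      then show "w ! i = x (p + int i)" using \<open>i < length w\<close> by simp
    qed
  next
    assume "\<forall>i<length w. w ! i = x (p + int i)"
    then show "w = map (\<lambda>i. x (p + int i)) [0..<length w]" by (intro nth_equalityI) simp_all
  qed
  show ?thesis
    by (simp only: lang2_def mem_Collect_eq eq)
qed

lemma lang2_take: "w \<in> lang2 T \<Longrightarrow> take k w \<in> lang2 T"
  unfolding lang2_iff_nth by auto

lemma lang2_drop:
  assumes "w \<in> lang2 T"
  shows "drop k w \<in> lang2 T"
proof -
  obtain x p where "x \<in> T" and x: "\<forall>i<length w. w ! i = x (p + int i)"
    using assms unfolding lang2_iff_nth by blast
  have "drop k w ! i = x ((p + int k) + int i)" if "i < length (drop k w)" for i
    using that x by (simp add: algebra_simps)
  then show ?thesis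
    unfolding lang2_iff_nth using \<open>x \<in> T\<close> by blast
qed

definition ends_with :: "(int \<Rightarrow> 'a) set \<Rightarrow> 'a list \<Rightarrow> (int \<Rightarrow> 'a) \<Rightarrow> bool" where
  "ends_with T w b \<longleftrightarrow> b \<in> T \<and> (\<forall>i<length w. b (int i - int (length w) + 1) = w ! i)"

lemma fol_eq_image_ends_with: "fol T w = (\<lambda>b i. b (int i)) ` {b. ends_with T w b}"
  by (auto simp: fol_def ends_with_def)

lemma ends_with_tl: "ends_with T w b \<Longrightarrow> ends_with T (tl w) b"
proof (cases w)
  case (Cons a v)
  assume b: "ends_with T w b"
  have "b (int i - int (length v) + 1) = v ! i" if "i < length v" for i
  proof -
    have "Suc i < length w" using that Cons by simp
    then have "b (int (Suc i) - int (length w) + 1) = w ! Suc i"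
      using b unfolding ends_with_def by blast
    then show ?thesis using Cons by simp
  qed
  then show ?thesis using b Cons by (simp add: ends_with_def)
qed simp

lemma fol_subset_fol_tl: "fol T w \<subseteq> fol T (tl w)"
  unfolding fol_eq_image_ends_with using ends_with_tl by blast

definition sig_len :: "(int \<Rightarrow> 'a) set \<Rightarrow> 'a list \<Rightarrow> nat" where
  "sig_len T u = (GREATEST k. k \<le> length u \<and> significant T (drop (length u - k) u))"

lemma sig_eq_drop_sig_len: "sig T u = drop (length u - sig_len T u) u"
  by (simp add: sig_def sig_len_def)

lemma
  assumes u: "u \<in> lang2 T" "u \<noteq> []"
  shows sig_len_ge_1: "1 \<le> sig_len T u"
    and sig_len_le_length: "sig_len T u \<le> length u"
    and significant_sig: "significant T (sig T u)"
    and sig_len_greatest: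
      "\<And>j. j \<le> length u \<Longrightarrow> significant T (drop (length u - j) u) \<Longrightarrow> j \<le> sig_len T u"
proof -
  let ?P = "\<lambda>k. k \<le> length u \<and> significant T (drop (length u - k) u)"
  have last: "drop (length u - 1) u = [last u]"
    using u(2) by (cases u rule: rev_cases) auto
  have "[last u] \<in> lang2 T"
    using lang2_drop[OF u(1), of "length u - 1"] by (simp only: last)
  then have P1: "?P 1"
    using u(2) unfolding last by (simp add: significant_def Suc_leI)
  have greatest: "?P (sig_len T u)"
    unfolding sig_len_def using GreatestI_nat[of ?P 1 "length u"] P1 by blast
  have le: "j \<le> sig_len T u" if "?P j" for j
    unfolding sig_len_def using Greatest_le_nat[of ?P j "length u"] that by blast
  show "1 \<le> sig_len T u" using le[OF P1] .
  show "sig_len T u \<le> length u" using greatest by simp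
  show "significant T (sig T u)" using greatest by (simp add: sig_eq_drop_sig_len)
  show "\<And>j. j \<le> length u \<Longrightarrow> significant T (drop (length u - j) u) \<Longrightarrow> j \<le> sig_len T u"
    using le by simp
qed

lemma last_sig:
  assumes "u \<in> lang2 T" "u \<noteq> []"
  shows "last (sig T u) = last u"
proof -
  have "length u - sig_len T u < length u"
    using sig_len_ge_1[OF assms] sig_len_le_length[OF assms] assms(2) by simp
  then show ?thesis by (simp add: sig_eq_drop_sig_len last_drop)
qed

lemma sig_singleton:
  assumes "[a] \<in> lang2 T"
  shows "sig T [a] = [a]"
proof -
  have "sig_len T [a] = 1"
    using sig_len_ge_1[OF assms] sig_len_le_length[OF assms] by simp
  then show ?thesis by (simp add: sig_eq_drop_sig_len)
qed

lemma sig_of_suffix: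
  assumes u: "u \<in> lang2 T" "u \<noteq> []" and L: "sig_len T u \<le> L" "L \<le> length u"
  shows "sig T (drop (length u - L) u) = sig T u"
proof -
  define v where "v = drop (length u - L) u"
  have lv: "length v = L" using L(2) by (simp add: v_def)
  have dv: "drop (L - k) v = drop (length u - k) u" if "k \<le> L" for k
    using that L(2) by (simp add: v_def drop_drop)
  have "sig_len T v = sig_len T u" unfolding sig_len_def[of T v] lv
  proof (rule Greatest_equality)
    show "sig_len T u \<le> L \<and> significant T (drop (L - sig_len T u) v)"
      using significant_sig[OF u] dv L(1) by (simp add: sig_eq_drop_sig_len)
  next
    fix j assume "j \<le> L \<and> significant T (drop (L - j) v)"
    then show "j \<le> sig_len T u" using dv[of j] sig_len_greatest[OF u, of j] L(2) by simp
  qed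
  then show ?thesis unfolding v_def[symmetric] sig_eq_drop_sig_len lv using dv L(1) by simp
qed

text \<open>The suffixes of \<open>u\<close> longer than \<open>sig u\<close> are not significant, so passing from one of them
  to the next shorter one does not change the followers.\<close>

lemma fol_sig:
  assumes u: "u \<in> lang2 T" "u \<noteq> []"
  shows "fol T (sig T u) = fol T u"
proof -
  let ?g = "sig_len T u"
  have "fol T (drop (length u - (?g + d)) u) = fol T (sig T u)" if "?g + d \<le> length u" for d
    using that
  proof (induction d)
    case 0
    show ?case by (simp add: sig_eq_drop_sig_len)
  next
    case (Suc d)
    define s where "s = drop (length u - (?g + Suc d)) u"
    have length_s: "length s = ?g + Suc d" using Suc.prems by (simp add: s_def)
    have "length u - (?g + d) = Suc (length u - (?g + Suc d))" using Suc.prems by simp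
    then have tl_s: "tl s = drop (length u - (?g + d)) u"
      unfolding s_def by (simp only: tl_drop drop_Suc)
    have "s \<in> lang2 T" unfolding s_def using u(1) by (rule lang2_drop)
    moreover have "\<not> significant T s"
      using sig_len_greatest[OF u, of "?g + Suc d"] Suc.prems unfolding s_def by auto
    moreover have "2 \<le> length s" using sig_len_ge_1[OF u] length_s by simp
    ultimately have "\<not> fol T s \<subset> fol T (tl s)" by (simp add: significant_def)
    then have "fol T s = fol T (tl s)" using fol_subset_fol_tl[of T s] by (simp add: psubset_eq)
    also have "\<dots> = fol T (sig T u)" unfolding tl_s using Suc.IH Suc.prems by simp
    finally show ?case unfolding s_def .
  qed
  from this[of "length u - ?g"] show ?thesis using sig_len_le_length[OF u] by simp
qed

definition sig_path :: "(int \<Rightarrow> 'a) set \<Rightarrow> 'a list \<Rightarrow> 'a list list" where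
  "sig_path T w = map (\<lambda>k. sig T (take (Suc k) w)) [0..<length w]"

lemma map_last_sig_path:
  assumes "w \<in> lang2 T"
  shows "map last (sig_path T w) = w"
proof (rule nth_equalityI)
  show "length (map last (sig_path T w)) = length w" by (simp add: sig_path_def)
next
  fix k assume "k < length (map last (sig_path T w))"
  then have k: "k < length w" by (simp add: sig_path_def)
  have "map last (sig_path T w) ! k = last (sig T (take (Suc k) w))"
    using k by (simp add: sig_path_def)
  also have "\<dots> = last (take (Suc k) w)"
    using last_sig[OF lang2_take[OF assms], of "Suc k"] k by (cases w) simp_all
  also have "\<dots> = w ! k"
    using k by (simp add: take_Suc_conv_app_nth)
  finally show "map last (sig_path T w) ! k = w ! k" .
qed

locale shift_invariant =
  fixes T :: "(int \<Rightarrow> 'a) set"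
  assumes shift2_mem_iff: "shift2 x \<in> T \<longleftrightarrow> x \<in> T"
begin

lemma translate_mem_iff: "(\<lambda>j. x (j + k)) \<in> T \<longleftrightarrow> x \<in> T"
proof -
  have "\<forall>x. (\<lambda>j. x (j + k)) \<in> T \<longleftrightarrow> x \<in> T"
  proof (induction k rule: int_induct[where k = 0])
    case base
    show ?case by simp
  next
    case (step1 i)
    have "(\<lambda>j. x (j + (i + 1))) = shift2 (\<lambda>j. x (j + i))" for x :: "int \<Rightarrow> 'a"
      by (simp add: shift2_def algebra_simps)
    then show ?case using step1 shift2_mem_iff by simp
  next
    case (step2 i)
    have "shift2 (\<lambda>j. x (j + (i - 1))) = (\<lambda>j. x (j + i))" for x :: "int \<Rightarrow> 'a"
      by (simp add: shift2_def algebra_simps)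
    then show ?case using step2 shift2_mem_iff by metis
  qed
  then show ?thesis by blast
qed

lemma lang2_iff_fol_ne: "w \<in> lang2 T \<longleftrightarrow> fol T w \<noteq> {}"
proof
  assume "w \<in> lang2 T"
  then obtain x p where "x \<in> T" and x: "\<forall>i<length w. w ! i = x (p + int i)"
    unfolding lang2_iff_nth by blast
  define b where "b = (\<lambda>j. x (j + (p + int (length w) - 1)))"
  have "b \<in> T" unfolding b_def translate_mem_iff by fact
  then have "ends_with T w b"
    unfolding ends_with_def using x by (simp add: b_def algebra_simps)
  then show "fol T w \<noteq> {}" unfolding fol_eq_image_ends_with by blast
next
  assume "fol T w \<noteq> {}"
  then obtain b where b: "ends_with T w b" unfolding fol_eq_image_ends_with by blast
  have "w ! i = b ((1 - int (length w)) + int i)" if "i < length w" for i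
    using b that by (auto simp: ends_with_def algebra_simps)
  then show "w \<in> lang2 T" unfolding lang2_iff_nth using b by (auto simp: ends_with_def)
qed

lemma ends_with_snoc:
  "ends_with T (w @ [a]) b \<longleftrightarrow> ends_with T w (\<lambda>j. b (j - 1)) \<and> b 0 = a"
proof -
  have "(\<lambda>j. b (j - 1)) \<in> T \<longleftrightarrow> b \<in> T"
    using translate_mem_iff[of b "-1"] by simp
  moreover have "(\<forall>i<length (w @ [a]). b (int i - int (length (w @ [a])) + 1) = (w @ [a]) ! i)
      \<longleftrightarrow> (\<forall>i<length w. b (int i - int (length w)) = w ! i) \<and> b 0 = a"
    by (auto simp: nth_append less_Suc_eq algebra_simps)
  ultimately show ?thesis by (auto simp: ends_with_def algebra_simps)
qed

lemma fol_snoc: "fol T (w @ [a]) = (\<lambda>r i. r (Suc i)) ` {r \<in> fol T w. r 1 = a}"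
proof (intro set_eqI iffI)
  fix x assume "x \<in> fol T (w @ [a])"
  then obtain b where "ends_with T (w @ [a]) b" and x: "x = (\<lambda>i. b (int i))"
    unfolding fol_eq_image_ends_with by blast
  then have b: "ends_with T w (\<lambda>j. b (j - 1))" "b 0 = a" by (simp_all add: ends_with_snoc)
  have "(\<lambda>i. b (int i - 1)) \<in> fol T w"
    unfolding fol_eq_image_ends_with by (rule image_eqI[where x = "\<lambda>j. b (j - 1)"]) (simp_all add: b)
  then show "x \<in> (\<lambda>r i. r (Suc i)) ` {r \<in> fol T w. r 1 = a}"
    by (intro rev_image_eqI[where x = "\<lambda>i. b (int i - 1)"]) (simp_all add: x b(2))
next
  fix x assume "x \<in> (\<lambda>r i. r (Suc i)) ` {r \<in> fol T w. r 1 = a}"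
  then obtain c where "ends_with T w c" "c 1 = a" and x: "x = (\<lambda>i. c (int (Suc i)))"
    unfolding fol_eq_image_ends_with by auto
  then have "(\<lambda>j. c (j + 1)) \<in> {b. ends_with T (w @ [a]) b}" by (simp add: ends_with_snoc)
  then show "x \<in> fol T (w @ [a])"
    unfolding fol_eq_image_ends_with by (rule rev_image_eqI) (simp add: x add.commute)
qed

lemma fol_snoc_cong: "fol T v = fol T w \<Longrightarrow> fol T (v @ [a]) = fol T (w @ [a])"
  by (simp add: fol_snoc)

lemma lang2_sig_snoc_iff:
  "u \<in> lang2 T \<Longrightarrow> u \<noteq> [] \<Longrightarrow> sig T u @ [a] \<in> lang2 T \<longleftrightarrow> u @ [a] \<in> lang2 T"
  by (simp add: lang2_iff_fol_ne fol_snoc_cong[OF fol_sig])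

lemma significant_butlast:
  assumes "s \<noteq> []" and sa: "significant T (s @ [a])"
  shows "significant T s"
proof -
  have s: "s \<in> lang2 T"
    using lang2_take[of "s @ [a]" T "length s"] sa by (simp add: significant_def)
  show ?thesis
  proof (cases "length s = 1")
    case True
    then show ?thesis using s by (simp add: significant_def)
  next
    case False
    then have "2 \<le> length s" using \<open>s \<noteq> []\<close> by (cases "length s") auto
    moreover have "fol T s \<noteq> fol T (tl s)"
    proof
      assume "fol T s = fol T (tl s)"
      then have "fol T (s @ [a]) = fol T (tl s @ [a])" by (rule fol_snoc_cong)
      then show False using sa \<open>s \<noteq> []\<close> by (simp add: significant_def tl_append2)
    qed
    ultimately show ?thesis
      using s fol_subset_fol_tl[of T s] by (simp add: significant_def psubset_eq)
  qed
qed

lemma sig_len_snoc_le: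
  assumes ua: "u @ [a] \<in> lang2 T" and "u \<noteq> []"
  shows "sig_len T (u @ [a]) \<le> Suc (sig_len T u)"
proof -
  let ?k = "sig_len T (u @ [a])"
  have u: "u \<in> lang2 T" using lang2_take[OF ua, of "length u"] by simp
  have k: "?k \<le> Suc (length u)" "significant T (drop (Suc (length u) - ?k) (u @ [a]))"
    using sig_len_le_length[OF ua] significant_sig[OF ua] by (simp_all add: sig_eq_drop_sig_len)
  show ?thesis
  proof (cases "?k \<le> 1")
    case False
    define s where "s = drop (length u - (?k - 1)) u"
    have shift: "Suc (length u) - ?k = length u - (?k - 1)" using False by simp
    have "drop (Suc (length u) - ?k) (u @ [a]) = s @ [a]" unfolding shift by (simp add: s_def)
    moreover have "s \<noteq> []" using False k(1) by (simp add: s_def)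
    ultimately have "significant T s" using significant_butlast k(2) by simp
    then have "?k - 1 \<le> sig_len T u"
      using sig_len_greatest[OF u \<open>u \<noteq> []\<close>, of "?k - 1"] k(1) by (simp add: s_def)
    then show ?thesis by simp
  qed simp
qed

lemma sig_snoc:
  assumes ua: "u @ [a] \<in> lang2 T" and "u \<noteq> []"
  shows "sig T (sig T u @ [a]) = sig T (u @ [a])"
proof -
  have u: "u \<in> lang2 T" using lang2_take[OF ua, of "length u"] by simp
  have "sig T u @ [a] = drop (length (u @ [a]) - Suc (sig_len T u)) (u @ [a])"
    using sig_len_le_length[OF u \<open>u \<noteq> []\<close>] by (simp add: sig_eq_drop_sig_len)
  also have "sig T \<dots> = sig T (u @ [a])"
    by (rule sig_of_suffix[OF ua])
      (use sig_len_snoc_le[OF assms] sig_len_le_length[OF u \<open>u \<noteq> []\<close>] in simp_all)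
  finally show ?thesis .
qed

lemma sig_path_in_hb_paths:
  assumes w: "w \<in> lang2 T" "w \<noteq> []"
  shows "sig_path T w \<in> hb_paths_from_symbols T (length w)"
proof -
  let ?ps = "sig_path T w"
  have prefix: "take (Suc k) w \<in> lang2 T" "take (Suc k) w \<noteq> []" for k
    using lang2_take[OF w(1)] w(2) by simp_all
  have ps_nth: "?ps ! k = sig T (take (Suc k) w)" if "k < length w" for k
    using that by (simp add: sig_path_def)
  have "significant T v" if "v \<in> set ?ps" for v
    using that significant_sig[OF prefix] by (auto simp: sig_path_def)
  moreover have "length (hd ?ps) = 1"
  proof -
    have "take 1 w = [hd w]" using w(2) by (cases w) simp_all
    then have "hd ?ps = [hd w]"
      using w(2) prefix(1)[of 0] by (simp add: sig_path_def hd_map sig_singleton)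
    then show ?thesis by simp
  qed
  moreover have "hb_edge T (?ps ! i) (?ps ! Suc i)" if i: "Suc i < length w" for i
  proof -
    define u where "u = take (Suc i) w"
    define b where "b = w ! Suc i"
    have ub: "take (Suc (Suc i)) w = u @ [b]"
      using i by (simp add: u_def b_def take_Suc_conv_app_nth)
    have u: "u \<in> lang2 T" "u \<noteq> []" using prefix by (simp_all add: u_def)
    have ub_lang: "u @ [b] \<in> lang2 T" using prefix(1)[of "Suc i"] ub by simp
    then have "sig T u @ [b] \<in> lang2 T" using lang2_sig_snoc_iff[OF u] by simp
    moreover have "?ps ! Suc i = sig T (sig T u @ [b])"
      using ps_nth[OF i] ub sig_snoc[OF ub_lang u(2)] by simp
    moreover have "?ps ! i = sig T u" using ps_nth i by (simp add: u_def)
    moreover have "significant T (?ps ! i)" "significant T (?ps ! Suc i)"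
      using ps_nth i significant_sig[OF prefix] by simp_all
    ultimately show ?thesis unfolding hb_edge_def by auto
  qed
  ultimately show ?thesis by (simp add: hb_paths_from_symbols_def sig_path_def)
qed

lemma hb_path_prefix:
  assumes ps: "ps \<in> hb_paths_from_symbols T n" and "k < n"
  shows "take (Suc k) (map last ps) \<in> lang2 T \<and> ps ! k = sig T (take (Suc k) (map last ps))"
proof -
  let ?w = "map last ps"
  have len: "length ps = n" and hd: "length (hd ps) = 1"
    and sig: "\<And>v. v \<in> set ps \<Longrightarrow> significant T v"
    using ps by (simp_all add: hb_paths_from_symbols_def)
  show ?thesis
    using \<open>k < n\<close>
  proof (induction k)
    case 0
    obtain x where x: "ps ! 0 = [x]"
      using hd 0 len by (cases ps) (auto simp: length_Suc_conv)
    have "ps ! 0 \<in> set ps" using 0 len by simp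
    then have x_lang: "[x] \<in> lang2 T" using sig x by (simp add: significant_def)
    moreover have "take (Suc 0) ?w = [x]"
      using take_Suc_conv_app_nth[of 0 ?w] x 0 len by simp
    ultimately show ?case using x sig_singleton[OF x_lang] by simp
  next
    case (Suc k)
    define u where "u = take (Suc k) ?w"
    have u: "u \<in> lang2 T" "u \<noteq> []" "ps ! k = sig T u"
      using Suc len by (auto simp: u_def)
    have "hb_edge T (ps ! k) (ps ! Suc k)"
      using ps Suc.prems by (simp add: hb_paths_from_symbols_def)
    then obtain b where b: "ps ! k @ [b] \<in> lang2 T" "ps ! Suc k = sig T (ps ! k @ [b])"
      unfolding hb_edge_def by blast
    have "?w ! Suc k = last (ps ! k @ [b])"
      using b last_sig[OF b(1)] Suc.prems len by simp
    then have "take (Suc (Suc k)) ?w = u @ [b]"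
      using Suc.prems len by (simp add: u_def take_Suc_conv_app_nth)
    moreover have "u @ [b] \<in> lang2 T" using b(1) lang2_sig_snoc_iff[OF u(1,2)] u(3) by simp
    ultimately show ?case using b(2) u sig_snoc by simp
  qed
qed

lemma hb_path_eq_sig_path:
  assumes ps: "ps \<in> hb_paths_from_symbols T n" and "1 \<le> n"
  shows "map last ps \<in> lang2 T" "ps = sig_path T (map last ps)"
proof -
  have len: "length ps = n" using ps by (simp add: hb_paths_from_symbols_def)
  show "map last ps \<in> lang2 T"
    using hb_path_prefix[OF ps, of "n - 1"] \<open>1 \<le> n\<close> len by simp
  show "ps = sig_path T (map last ps)"
    using hb_path_prefix[OF ps] len by (intro nth_equalityI) (simp_all add: sig_path_def)
qed

theorem card_hb_paths_from_symbols:
  assumes "1 \<le> n"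
  shows "card (hb_paths_from_symbols T n) = card {w \<in> lang2 T. length w = n}"
proof -
  have "bij_betw (sig_path T) {w \<in> lang2 T. length w = n} (hb_paths_from_symbols T n)"
  proof (rule bij_betw_byWitness[where f' = "map last"])
    show "sig_path T ` {w \<in> lang2 T. length w = n} \<subseteq> hb_paths_from_symbols T n"
      using sig_path_in_hb_paths \<open>1 \<le> n\<close> by fastforce
    show "map last ` hb_paths_from_symbols T n \<subseteq> {w \<in> lang2 T. length w = n}"
      using hb_path_eq_sig_path(1) \<open>1 \<le> n\<close> by (auto simp: hb_paths_from_symbols_def)
  qed (use map_last_sig_path hb_path_eq_sig_path(2) \<open>1 \<le> n\<close> in auto)
  then show ?thesis by (simp add: bij_betw_same_card)
qed

end

lemma shift_invariant_natext: "shift_invariant (natext X)"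
proof (rule shift_invariant.intro)
  fix x :: "int \<Rightarrow> 'a"
  have "(\<forall>p. (\<lambda>i. x ((p + 1) + int i)) \<in> X) \<longleftrightarrow> (\<forall>p. (\<lambda>i. x (p + int i)) \<in> X)"
    by (metis add_diff_cancel_right' diff_add_cancel)
  then show "shift2 x \<in> natext X \<longleftrightarrow> x \<in> natext X"
    by (simp add: natext_def shift2_def algebra_simps)
qed

lemma inj_shift2: "inj shift2"
proof (rule injI, rule ext)
  fix x y :: "int \<Rightarrow> 'a" and i :: int
  assume "shift2 x = shift2 y"
  then have "shift2 x (i - 1) = shift2 y (i - 1)" by simp
  then show "x i = y i" by (simp add: shift2_def)
qed

lemma subshift2_shift_invariant:
  assumes "subshift2 X"
  shows "shift_invariant X"
proof (rule shift_invariant.intro)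
  fix x
  have "shift2 ` X = X" using assms by (simp add: subshift2_def)
  then show "shift2 x \<in> X \<longleftrightarrow> x \<in> X" using inj_image_mem_iff[OF inj_shift2, of x X] by simp
qed

text \<open>In the one-sided case only the hypothesis \<open>lang1 Xp = lang2 (natext Xp)\<close> is used: the
  count is carried out in the natural extension, which is always shift-invariant.\<close>

theorem corollary5p9:
  shows "(\<forall>(Xp :: (nat \<Rightarrow> 'a::finite) set). subshift1 Xp \<and> lang1 Xp = lang2 (natext Xp) \<longrightarrow>
           (\<forall>n\<ge>1. card (hb_paths_from_symbols (natext Xp) n) = card {w\<in>lang1 Xp. length w = n}))
       \<and> (\<forall>(X :: (int \<Rightarrow> 'a::finite) set). subshift2 X \<longrightarrow>
           (\<forall>n\<ge>1. card (hb_paths_from_symbols X n) = card {w\<in>lang2 X. length w = n}))"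
  using shift_invariant.card_hb_paths_from_symbols[OF shift_invariant_natext]
    shift_invariant.card_hb_paths_from_symbols[OF subshift2_shift_invariant]
  by auto

end
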